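(* Let $G$ be a group, $g,h\in G$, and $k=\min\{|G:C_G(g)|,|G:C_G(h)|\}$, assumed finite. If the set $\{x\in G:[g,h^x]=1\}$ is $k$-large in $G$, then every element of the conjugacy class $g^G$ commutes with every element of the conjugacy class $h^G$.
   Context: $[a,b]=a^{-1}b^{-1}ab$, $a^x=x^{-1}ax$. A subset $X\subseteq G$ is $k$-large in $G$ if the intersection of any $k$ left translates $a_1X\cap\dots\cap a_kX$ ($a_i\in G$) is non-empty. *)

theory Defs
  imports "HOL-Algebra.Coset"
begin

definition commutator :: "('a, 'b) monoid_scheme \<Rightarrow> 'a \<Rightarrow> 'a \<Rightarrow> 'a" where
  "commutator G a b = inv\<^bsub>G\<^esub> a \<otimes>\<^bsub>G\<^esub> inv\<^bsub>G\<^esub> b \<otimes>\<^bsub>G\<^esub> a \<otimes>\<^bsub>G\<^esub> b"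

definition conj_elem :: "('a, 'b) monoid_scheme \<Rightarrow> 'a \<Rightarrow> 'a \<Rightarrow> 'a" where
  "conj_elem G a x = inv\<^bsub>G\<^esub> x \<otimes>\<^bsub>G\<^esub> a \<otimes>\<^bsub>G\<^esub> x"

definition conj_class :: "('a, 'b) monoid_scheme \<Rightarrow> 'a \<Rightarrow> 'a set" where
  "conj_class G a = {conj_elem G a x | x. x \<in> carrier G}"

definition centralizer :: "('a, 'b) monoid_scheme \<Rightarrow> 'a \<Rightarrow> 'a set" where
  "centralizer G a = {x \<in> carrier G. x \<otimes>\<^bsub>G\<^esub> a = a \<otimes>\<^bsub>G\<^esub> x}"

definition k_large :: "('a, 'b) monoid_scheme \<Rightarrow> nat \<Rightarrow> 'a set \<Rightarrow> bool" where
  "k_large G k X \<longleftrightarrow>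
     (\<forall>a. (\<forall>i<k. a i \<in> carrier G) \<longrightarrow> (\<exists>y. \<forall>i<k. y \<in> a i <#\<^bsub>G\<^esub> X))"

end

theory Submission
  imports Defs
begin

text \<open>
  Let \<open>X = {x. [g, h\<^sup>x] = 1}\<close>. Conjugation by \<open>C\<^sub>G(h)\<close> fixes \<open>h\<close> and conjugation by
  \<open>C\<^sub>G(g)\<close> fixes \<open>g\<close>, so \<open>C\<^sub>G(h) X = X = X C\<^sub>G(g)\<close>. If \<open>r\<^sub>1, \<dots>, r\<^sub>k\<close> represent the right
  cosets of \<open>C\<^sub>G(h)\<close>, largeness gives one \<open>y\<close> with \<open>r\<^sub>i y \<in> X\<close> for all \<open>i\<close>, whence
  \<open>X \<supseteq> \<Union>\<^sub>i C\<^sub>G(h) r\<^sub>i y = G\<close>; for \<open>C\<^sub>G(g)\<close>, largeness applied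
  to the translates \<open>z r\<^sub>i\<close> shows instead that \<open>X\<close> meets every left coset \<open>z C\<^sub>G(g)\<close>.
  Thus \<open>g\<close> commutes with every conjugate of \<open>h\<close>, and conjugating once more gives the claim.
\<close>

context group
begin

lemma inv_mult_cancel_left [simp]:
  "x \<in> carrier G \<Longrightarrow> y \<in> carrier G \<Longrightarrow> inv x \<otimes> (x \<otimes> y) = y"
  by (simp add: m_assoc[symmetric])

lemma mult_inv_cancel_left [simp]:
  "x \<in> carrier G \<Longrightarrow> y \<in> carrier G \<Longrightarrow> x \<otimes> (inv x \<otimes> y) = y"
  by (simp add: m_assoc[symmetric])

lemma commutator_eq_one_iff:
  assumes "a \<in> carrier G" "b \<in> carrier G"
  shows "commutator G a b = \<one> \<longleftrightarrow> a \<otimes> b = b \<otimes> a"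
proof -
  have "commutator G a b = inv (b \<otimes> a) \<otimes> (a \<otimes> b)"
    unfolding commutator_def using assms by (simp add: inv_mult_group m_assoc)
  also have "\<dots> = \<one> \<longleftrightarrow> a \<otimes> b = b \<otimes> a"
    using assms by (simp add: inv_solve_left')
  finally show ?thesis .
qed

lemma conj_elem_closed [simp]:
  "a \<in> carrier G \<Longrightarrow> x \<in> carrier G \<Longrightarrow> conj_elem G a x \<in> carrier G"
  unfolding conj_elem_def by simp

lemma conj_elem_mult:
  "a \<in> carrier G \<Longrightarrow> b \<in> carrier G \<Longrightarrow> x \<in> carrier G \<Longrightarrow>
    conj_elem G (a \<otimes> b) x = conj_elem G a x \<otimes> conj_elem G b x"
  unfolding conj_elem_def by (simp add: m_assoc)

lemma conj_elem_conj_elem: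
  "a \<in> carrier G \<Longrightarrow> x \<in> carrier G \<Longrightarrow> y \<in> carrier G \<Longrightarrow>
    conj_elem G (conj_elem G a x) y = conj_elem G a (x \<otimes> y)"
  unfolding conj_elem_def by (simp add: inv_mult_group m_assoc)

lemma conj_elem_inj:
  assumes "a \<in> carrier G" "b \<in> carrier G" "x \<in> carrier G"
    and "conj_elem G a x = conj_elem G b x"
  shows "a = b"
proof -
  have "conj_elem G (conj_elem G a x) (inv x) = conj_elem G (conj_elem G b x) (inv x)"
    using assms(4) by simp
  then show ?thesis
    using assms(1-3) by (simp add: conj_elem_conj_elem) (simp add: conj_elem_def)
qed

lemma commute_iff_conj_elem_commute:
  assumes "a \<in> carrier G" "b \<in> carrier G" "x \<in> carrier G"
  shows "a \<otimes> b = b \<otimes> a \<longleftrightarrow>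
    conj_elem G a x \<otimes> conj_elem G b x = conj_elem G b x \<otimes> conj_elem G a x"
proof -
  have "conj_elem G a x \<otimes> conj_elem G b x = conj_elem G (a \<otimes> b) x"
    and "conj_elem G b x \<otimes> conj_elem G a x = conj_elem G (b \<otimes> a) x"
    using assms by (simp_all add: conj_elem_mult)
  then show ?thesis
    using assms conj_elem_inj[of "a \<otimes> b" "b \<otimes> a" x] by auto
qed

lemma conj_elem_centralizer:
  assumes "c \<in> centralizer G a" "a \<in> carrier G"
  shows "conj_elem G a c = a"
proof -
  have "c \<in> carrier G" "a \<otimes> c = c \<otimes> a"
    using assms(1) unfolding centralizer_def by auto
  then show ?thesis
    using assms(2) unfolding conj_elem_def by (simp add: m_assoc)
qed

lemma conj_elem_centralizer_mult:
  assumes "c \<in> centralizer G a" "a \<in> carrier G" "x \<in> carrier G"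
  shows "conj_elem G a (c \<otimes> x) = conj_elem G a x"
proof -
  have "c \<in> carrier G"
    using assms(1) by (simp add: centralizer_def)
  then show ?thesis
    using assms by (simp add: conj_elem_conj_elem[symmetric] conj_elem_centralizer)
qed

lemma commute_conj_elem_centralizer:
  assumes "d \<in> centralizer G a" "a \<in> carrier G" "b \<in> carrier G" "a \<otimes> b = b \<otimes> a"
  shows "a \<otimes> conj_elem G b d = conj_elem G b d \<otimes> a"
proof -
  have "d \<in> carrier G"
    using assms(1) by (simp add: centralizer_def)
  then show ?thesis
    using commute_iff_conj_elem_commute[of a b d] assms by (simp add: conj_elem_centralizer)
qed

lemma subgroup_centralizer:
  assumes "a \<in> carrier G"
  shows "subgroup (centralizer G a) G"
proof (rule subgroupI)
  fix c assume "c \<in> centralizer G a"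
  then have c: "c \<in> carrier G" "c \<otimes> a = a \<otimes> c"
    unfolding centralizer_def by auto
  have "inv c \<otimes> a = inv c \<otimes> (a \<otimes> c) \<otimes> inv c"
    using assms c(1) by (simp add: m_assoc)
  also have "\<dots> = a \<otimes> inv c"
    using assms c by (simp add: c(2)[symmetric])
  finally show "inv c \<in> centralizer G a"
    using c(1) unfolding centralizer_def by simp
next
  fix b c assume "b \<in> centralizer G a" "c \<in> centralizer G a"
  then show "b \<otimes> c \<in> centralizer G a"
    using assms unfolding centralizer_def by (simp add: m_assoc) (simp add: m_assoc[symmetric])
qed (auto simp: centralizer_def assms)

lemma rcosets_enumeration:
  assumes "subgroup H G" "finite (rcosets H)"
  obtains r where "\<And>i. i < card (rcosets H) \<Longrightarrow> r i \<in> carrier G"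
    and "\<And>x. x \<in> carrier G \<Longrightarrow> \<exists>i < card (rcosets H). x \<in> H #> r i"
proof -
  obtain f where f: "bij_betw f {0..<card (rcosets H)} (rcosets H)"
    using ex_bij_betw_nat_finite[OF assms(2)] by blast
  have "\<forall>i < card (rcosets H). \<exists>a. a \<in> carrier G \<and> f i = H #> a"
    using bij_betw_apply[OF f] unfolding RCOSETS_def by auto
  then obtain r where r: "\<And>i. i < card (rcosets H) \<Longrightarrow> r i \<in> carrier G \<and> f i = H #> r i"
    by metis
  show thesis
  proof (rule that)
    show "r i \<in> carrier G" if "i < card (rcosets H)" for i
      using r that by blast
  next
    fix x assume x: "x \<in> carrier G"
    then have "H #> x \<in> f ` {0..<card (rcosets H)}"
      using f rcosetsI[OF subgroup.subset[OF assms(1)]] by (simp add: bij_betw_def)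
    then obtain i where "i < card (rcosets H)" "H #> x = H #> r i"
      using r by force
    then show "\<exists>i < card (rcosets H). x \<in> H #> r i"
      using rcos_self[OF x assms(1)] by auto
  qed
qed

lemma card_rcosets_pos:
  "subgroup H G \<Longrightarrow> finite (rcosets H) \<Longrightarrow> 0 < card (rcosets H)"
  using rcosetsI[OF subgroup.subset, of H \<one>] by (auto simp: card_gt_0_iff)

lemma k_large_common_translate:
  assumes "k_large G k X" "X \<subseteq> carrier G" "0 < k" "\<forall>i < k. b i \<in> carrier G"
  shows "\<exists>y \<in> carrier G. \<forall>i < k. b i \<otimes> y \<in> X"
proof -
  obtain y where y: "\<forall>i < k. y \<in> inv (b i) <# X"
    using assms(1)[unfolded k_large_def, rule_format, of "\<lambda>i. inv (b i)"] assms(4) by auto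
  have "y \<in> carrier G \<and> b i \<otimes> y \<in> X" if "i < k" for i
    using y that assms(2,4) unfolding l_coset_def by (auto simp: subsetD)
  then show ?thesis
    using assms(3) by blast
qed

lemma k_large_left_invariant_eq_carrier:
  assumes H: "subgroup H G" "finite (rcosets H)"
    and large: "k_large G (card (rcosets H)) X" "X \<subseteq> carrier G"
    and invariant: "\<And>c x. c \<in> H \<Longrightarrow> x \<in> X \<Longrightarrow> c \<otimes> x \<in> X"
  shows "X = carrier G"
proof
  show "carrier G \<subseteq> X"
  proof
    fix z assume z: "z \<in> carrier G"
    obtain r where r: "\<And>i. i < card (rcosets H) \<Longrightarrow> r i \<in> carrier G"
      and cover: "\<And>x. x \<in> carrier G \<Longrightarrow> \<exists>i < card (rcosets H). x \<in> H #> r i"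
      using rcosets_enumeration[OF H] by blast
    obtain y where y: "y \<in> carrier G" "\<And>i. i < card (rcosets H) \<Longrightarrow> r i \<otimes> y \<in> X"
      using k_large_common_translate[OF large card_rcosets_pos[OF H], of r] r by blast
    obtain i c where i: "i < card (rcosets H)" and c: "c \<in> H" "z \<otimes> inv y = c \<otimes> r i"
      using cover[of "z \<otimes> inv y"] z y(1) unfolding r_coset_def by auto
    have "z = z \<otimes> inv y \<otimes> y"
      using z y(1) by (simp add: m_assoc)
    also have "\<dots> = c \<otimes> (r i \<otimes> y)"
      using c y(1) r[OF i] subgroup.mem_carrier[OF H(1)] by (simp add: m_assoc)
    finally have "z = c \<otimes> (r i \<otimes> y)" .
    then show "z \<in> X"
      using invariant[OF c(1) y(2)[OF i]] by simp
  qed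
qed (rule large(2))

lemma k_large_right_invariant_eq_carrier:
  assumes K: "subgroup K G" "finite (rcosets K)"
    and large: "k_large G (card (rcosets K)) X" "X \<subseteq> carrier G"
    and invariant: "\<And>x d. x \<in> X \<Longrightarrow> d \<in> K \<Longrightarrow> x \<otimes> d \<in> X"
  shows "X = carrier G"
proof
  show "carrier G \<subseteq> X"
  proof
    fix z assume z: "z \<in> carrier G"
    obtain r where r: "\<And>i. i < card (rcosets K) \<Longrightarrow> r i \<in> carrier G"
      and cover: "\<And>x. x \<in> carrier G \<Longrightarrow> \<exists>i < card (rcosets K). x \<in> K #> r i"
      using rcosets_enumeration[OF K] by blast
    obtain y where y: "y \<in> carrier G" "\<And>i. i < card (rcosets K) \<Longrightarrow> z \<otimes> r i \<otimes> y \<in> X"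
      using k_large_common_translate[OF large card_rcosets_pos[OF K], of "\<lambda>i. z \<otimes> r i"] r z
      by blast
    obtain i d where i: "i < card (rcosets K)" and d: "d \<in> K" "inv y = d \<otimes> r i"
      using cover[of "inv y"] y(1) unfolding r_coset_def by auto
    have d_carrier: "d \<in> carrier G"
      using subgroup.mem_carrier[OF K(1) d(1)] .
    have "y = inv (inv y)"
      using y(1) by simp
    also have "\<dots> = inv (r i) \<otimes> inv d"
      using d(2) r[OF i] d_carrier by (simp add: inv_mult_group)
    finally have "y = inv (r i) \<otimes> inv d" .
    then have "z \<otimes> inv d \<in> X"
      using y(2)[OF i] z r[OF i] d_carrier by (simp add: m_assoc)
    then have "z \<otimes> inv d \<otimes> d \<in> X"
      using invariant d(1) by blast
    then show "z \<in> X"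
      using z d_carrier by (simp add: m_assoc)
  qed
qed (rule large(2))

lemma conj_classes_commute:
  assumes "g \<in> carrier G" "h \<in> carrier G"
    and "\<And>x. x \<in> carrier G \<Longrightarrow> g \<otimes> conj_elem G h x = conj_elem G h x \<otimes> g"
  shows "\<forall>a \<in> conj_class G g. \<forall>b \<in> conj_class G h. a \<otimes> b = b \<otimes> a"
proof (intro ballI)
  fix a b assume "a \<in> conj_class G g" "b \<in> conj_class G h"
  then obtain u v where uv: "u \<in> carrier G" "v \<in> carrier G"
    and ab: "a = conj_elem G g u" "b = conj_elem G h v"
    unfolding conj_class_def by blast
  have "conj_elem G (conj_elem G h (v \<otimes> inv u)) u = b"
    using assms(2) uv ab(2) by (simp add: conj_elem_conj_elem m_assoc)
  then show "a \<otimes> b = b \<otimes> a"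
    using commute_iff_conj_elem_commute[of g "conj_elem G h (v \<otimes> inv u)" u] assms uv ab(1)
    by simp
qed

end

theorem theorem5p9:
  fixes G (structure) and g h :: 'a and k :: nat
  assumes "group G"
    and "g \<in> carrier G" and "h \<in> carrier G"
    and "finite (rcosets\<^bsub>G\<^esub> (centralizer G g)) \<or> finite (rcosets\<^bsub>G\<^esub> (centralizer G h))"
    and "k = (if \<not> finite (rcosets\<^bsub>G\<^esub> (centralizer G g)) then card (rcosets\<^bsub>G\<^esub> (centralizer G h))
              else if \<not> finite (rcosets\<^bsub>G\<^esub> (centralizer G h)) then card (rcosets\<^bsub>G\<^esub> (centralizer G g))
              else min (card (rcosets\<^bsub>G\<^esub> (centralizer G g))) (card (rcosets\<^bsub>G\<^esub> (centralizer G h))))"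
    and "k_large G k {x \<in> carrier G. commutator G g (conj_elem G h x) = \<one>}"
  shows "\<forall>a \<in> conj_class G g. \<forall>b \<in> conj_class G h. a \<otimes> b = b \<otimes> a"
proof -
  interpret group G by fact
  note g = \<open>g \<in> carrier G\<close> and h = \<open>h \<in> carrier G\<close>
  define X where "X = {x \<in> carrier G. commutator G g (conj_elem G h x) = \<one>}"
  have X_iff: "x \<in> X \<longleftrightarrow> x \<in> carrier G \<and> g \<otimes> conj_elem G h x = conj_elem G h x \<otimes> g" for x
    unfolding X_def using g h commutator_eq_one_iff by auto
  have left_invariant: "c \<otimes> x \<in> X" if "c \<in> centralizer G h" "x \<in> X" for c x
    using that h X_iff subgroup.mem_carrier[OF subgroup_centralizer[OF h]]
    by (simp add: conj_elem_centralizer_mult)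
  have right_invariant: "x \<otimes> d \<in> X" if "x \<in> X" "d \<in> centralizer G g" for x d
    using that g h X_iff subgroup.mem_carrier[OF subgroup_centralizer[OF g]]
    by (simp add: conj_elem_conj_elem[symmetric] commute_conj_elem_centralizer)
  have "k_large G k X" "X \<subseteq> carrier G"
    using assms(6) unfolding X_def by auto
  from assms(4,5) consider
      "finite (rcosets (centralizer G h))" "k = card (rcosets (centralizer G h))"
    | "finite (rcosets (centralizer G g))" "k = card (rcosets (centralizer G g))"
    by (auto simp: min_def split: if_splits)
  then have "X = carrier G"
  proof cases
    case 1
    then show ?thesis
      using k_large_left_invariant_eq_carrier[OF subgroup_centralizer[OF h]]
        \<open>k_large G k X\<close> \<open>X \<subseteq> carrier G\<close> left_invariant by blast
  next
    case 2
    then show ?thesis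
      using k_large_right_invariant_eq_carrier[OF subgroup_centralizer[OF g]]
        \<open>k_large G k X\<close> \<open>X \<subseteq> carrier G\<close> right_invariant by blast
  qed
  then show ?thesis
    using conj_classes_commute[OF g h] X_iff by blast
qed

end
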